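(* Let $\alpha>0$ and let $n$ be a positive integer. Let $f_n(x_1,\dots,x_n;\theta)$ be the joint probability density or mass function of random variables $X_1,\dots,X_n$, parameterized by $\theta\in\Theta\subseteq\mathbb{R}$. Assume there is a statistic $\varphi_n=\varphi(X_1,\dots,X_n)$ and a function $\Lambda$ such that $\frac{f_n(X_1,\dots,X_n;\theta_1)}{f_n(X_1,\dots,X_n;\theta_0)}=\Lambda(\varphi_n,\theta_0,\theta_1)$ for all $\theta_0,\theta_1\in\Theta$, where $\Lambda(\varphi_n,\theta_0,\theta_1)$ is increasing with respect to $\varphi_n$ whenever $\theta_0<\theta_1$. Let $\widehat{\theta}_n$ be a function of $\varphi_n$ taking values in $\Theta$. Then for every $\theta\in\Theta$, $$\Pr\Big\{\tfrac{f_n(X_1,\dots,X_n;\theta)}{f_n(X_1,\dots,X_n;\widehat\theta_n)}\le\tfrac{\alpha}{2},\ \widehat\theta_n\le\theta\ \Big|\ \theta\Big\}\le\tfrac{\alpha}{2},\qquad \Pr\Big\{\tfrac{f_n(X_1,\dots,X_n;\theta)}{f_n(X_1,\dots,X_n;\widehat\theta_n)}\le\tfrac{\alpha}{2},\ \widehat\theta_n\ge\theta\ \Big|\ \theta\Big\}\le\tfrac{\alpha}{2},$$ $$\Pr\Big\{\tfrac{f_n(X_1,\dots,X_n;\theta)}{f_n(X_1,\dots,X_n;\widehat\theta_n)}\le\tfrac{\alpha}{2}\ \Big|\ \theta\Big\}\le\alpha .$$ Moreover, if in addition $\widehat\theta_n$ is a maximum likelihood estimator of $\theta$, then for every nonempty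 subset $\mathscr{S}\subseteq\Theta$ and every $\theta\in\mathscr{S}$, $$\Pr\Big\{\tfrac{\sup_{\vartheta\in\mathscr{S}}f_n(X_1,\dots,X_n;\vartheta)}{\sup_{\vartheta\in\Theta}f_n(X_1,\dots,X_n;\vartheta)}\le\tfrac{\alpha}{2},\ \widehat\theta_n\le\inf\mathscr{S}\ \Big|\ \theta\Big\}\le\tfrac{\alpha}{2},\qquad \Pr\Big\{\tfrac{\sup_{\vartheta\in\mathscr{S}}f_n(X_1,\dots,X_n;\vartheta)}{\sup_{\vartheta\in\Theta}f_n(X_1,\dots,X_n;\vartheta)}\le\tfrac{\alpha}{2},\ \widehat\theta_n\ge\sup\mathscr{S}\ \Big|\ \theta\Big\}\le\tfrac{\alpha}{2},$$ $$\Pr\Big\{\tfrac{\sup_{\vartheta\in\mathscr{S}}f_n(X_1,\dots,X_n;\vartheta)}{\sup_{\vartheta\in\Theta}f_n(X_1,\dots,X_n;\vartheta)}\le\tfrac{\alpha}{2}\ \Big|\ \theta\Big\}\le\alpha .$$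
   Context: $\Pr\{\cdot\mid\theta\}$ denotes probability when $X_1,\dots,X_n$ have joint density/mass function $f_n(\cdot;\theta)$. The random variables $X_1,\dots,X_n$ need not be independent. *)

theory Defs
  imports "HOL-Probability.Probability"
begin

text \<open>Probability of an event (given by a predicate on the sample space) when the
observation has density/mass function \<open>f \<theta>\<close> with respect to the dominating
measure \<open>M\<close> (Lebesgue measure for densities, counting measure for mass functions).
It is defined as the outer probability, i.e. the infimum of the probabilities of
measurable supersets; for measurable events this is the ordinary probability.\<close>

definition Pr :: "'a measure \<Rightarrow> (real \<Rightarrow> 'a \<Rightarrow> real) \<Rightarrow> real \<Rightarrow> ('a \<Rightarrow> bool) \<Rightarrow> ennreal" where
  "Pr M f \<theta> P =
     (INF A \<in> {A \<in> sets M. {x \<in> space M. P x} \<subseteq> A}.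
        emeasure (density M (\<lambda>x. ennreal (f \<theta> x))) A)"

end

theory Submission
  imports Defs
begin

text \<open>Fix \<open>\<theta>\<close> and an observation \<open>x\<close> with \<open>f \<theta> x > 0\<close> whose estimate \<open>t\<close> satisfies
\<open>t \<le> \<theta>\<close> and \<open>f \<theta> x \<le> c * f t x\<close>. As \<open>f \<theta> / f t\<close> is nondecreasing in \<open>\<phi>\<close>, the inequality
\<open>f \<theta> \<le> c * f t\<close> persists on the whole sublevel set \<open>{\<phi> \<le> \<phi> x}\<close>, whose \<open>f \<theta>\<close>-probability is
therefore at most \<open>c\<close> because \<open>f t\<close> integrates to 1. Off the null set \<open>{f \<theta> = 0}\<close> the event is
covered by these nested sublevel sets, countably many of which exhaust their union, so its outer
probability is at most \<open>c\<close> as well; the case \<open>t \<ge> \<theta>\<close> is the mirror image with superlevel sets. For a maximum likelihood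
estimator and \<open>\<theta> \<in> S\<close>, the profile ratio \<open>sup\<^sub>S f / sup\<^sub>\<Theta> f\<close> dominates \<open>f \<theta> / f t\<close>, which
reduces the second group of bounds to the first.\<close>

definition outer_le :: "'a measure \<Rightarrow> 'a set \<Rightarrow> ennreal \<Rightarrow> bool" where
  "outer_le N A e \<longleftrightarrow> (\<exists>B\<in>sets N. A \<subseteq> B \<and> emeasure N B \<le> e)"

lemma outer_leI: "B \<in> sets N \<Longrightarrow> A \<subseteq> B \<Longrightarrow> emeasure N B \<le> e \<Longrightarrow> outer_le N A e"
  unfolding outer_le_def by blast

lemma outer_le_subset: "A \<subseteq> A' \<Longrightarrow> outer_le N A' e \<Longrightarrow> outer_le N A e"
  unfolding outer_le_def by blast

lemma outer_le_Un:
  assumes "outer_le N A a" "outer_le N B b"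
  shows "outer_le N (A \<union> B) (a + b)"
proof -
  obtain A' B' where A': "A' \<in> sets N" "A \<subseteq> A'" "emeasure N A' \<le> a"
    and B': "B' \<in> sets N" "B \<subseteq> B'" "emeasure N B' \<le> b"
    using assms unfolding outer_le_def by blast
  have "emeasure N (A' \<union> B') \<le> emeasure N A' + emeasure N B'"
    using A' B' by (intro emeasure_subadditive)
  also have "\<dots> \<le> a + b"
    using A' B' by (intro add_mono)
  finally show ?thesis
    using A' B' by (intro outer_leI[of "A' \<union> B'"]) auto
qed

lemma outer_le_density_support:
  fixes h :: "'a \<Rightarrow> real"
  assumes h: "h \<in> borel_measurable M" and A: "A \<subseteq> space M"
    and "outer_le (density M (\<lambda>x. ennreal (h x))) {x \<in> A. h x \<noteq> 0} e"
  shows "outer_le (density M (\<lambda>x. ennreal (h x))) A e"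
proof -
  let ?N = "density M (\<lambda>x. ennreal (h x))"
  define Z where "Z = {x \<in> space M. h x = 0}"
  have Z: "Z \<in> sets M"
    unfolding Z_def using h by measurable
  have "emeasure ?N Z = (\<integral>\<^sup>+x. ennreal (h x) * indicator Z x \<partial>M)"
    using Z h by (simp add: emeasure_density)
  also have "\<dots> = (\<integral>\<^sup>+x. 0 \<partial>M)"
    by (intro nn_integral_cong) (auto simp: Z_def indicator_def)
  finally have "outer_le ?N Z 0"
    using Z by (intro outer_leI) auto
  from outer_le_Un[OF assms(3) this] have "outer_le ?N ({x \<in> A. h x \<noteq> 0} \<union> Z) e"
    by simp
  moreover have "A \<subseteq> {x \<in> A. h x \<noteq> 0} \<union> Z"
    using A by (auto simp: Z_def)
  ultimately show ?thesis
    by (rule outer_le_subset[rotated])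
qed

lemma Pr_le_if_outer_le:
  assumes "outer_le (density M (\<lambda>x. ennreal (f \<theta> x))) {x \<in> space M. P x} e"
  shows "Pr M f \<theta> P \<le> e"
  using assms unfolding Pr_def outer_le_def by (auto intro: INF_lower2)

lemma Pr_mono:
  assumes "\<And>x. x \<in> space M \<Longrightarrow> P x \<Longrightarrow> Q x"
  shows "Pr M f \<theta> P \<le> Pr M f \<theta> Q"
  unfolding Pr_def by (rule INF_superset_mono) (use assms in auto)

lemma outer_le_sublevels:
  fixes \<psi> :: "'a \<Rightarrow> real"
  assumes \<psi>: "\<psi> \<in> borel_measurable N" and T: "T \<subseteq> space N"
    and sublevel: "\<And>x. x \<in> T \<Longrightarrow> emeasure N {y \<in> space N. \<psi> y \<le> \<psi> x} \<le> e"
  shows "outer_le N T e"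
proof -
  consider "T = {}" | x0 where "x0 \<in> T" "\<forall>x\<in>T. \<psi> x \<le> \<psi> x0"
    | "T \<noteq> {}" "\<not> (\<exists>x0\<in>T. \<forall>x\<in>T. \<psi> x \<le> \<psi> x0)"
    by blast
  then show ?thesis
  proof cases
    case 1
    then show ?thesis
      by (intro outer_leI[of "{}"]) auto
  next
    case (2 x0)
    then show ?thesis
      using T sublevel[of x0] \<psi> by (intro outer_leI[of "{y \<in> space N. \<psi> y \<le> \<psi> x0}"]) auto
  next
    case 3
    \<comment> \<open>No largest sublevel set: an increasing sequence of them exhausts the union.\<close>
    let ?V = "(\<lambda>x. ereal (\<psi> x)) ` T"
    obtain a where a: "incseq a" "range a \<subseteq> ?V" "Sup ?V = (SUP k. a k)"
      using 3(1) Sup_countable_SUP[of ?V] by auto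
    define C where "C k = {y \<in> space N. ereal (\<psi> y) \<le> a k}" for k
    have C_sets: "C k \<in> sets N" for k
      unfolding C_def using \<psi> by measurable
    have "incseq C"
      using a(1) unfolding C_def incseq_def by (auto intro: order_trans)
    have "emeasure N (C k) \<le> e" for k
    proof -
      obtain x where "x \<in> T" "a k = ereal (\<psi> x)"
        using a(2) by blast
      then show ?thesis
        using sublevel[of x] by (simp add: C_def)
    qed
    then have "(SUP k. emeasure N (C k)) \<le> e"
      by (rule SUP_least)
    moreover have "range C \<subseteq> sets N"
      using C_sets by auto
    ultimately have "emeasure N (\<Union>k. C k) \<le> e"
      using SUP_emeasure_incseq[OF _ \<open>incseq C\<close>] by simp
    moreover have "T \<subseteq> (\<Union>k. C k)"
    proof
      fix x assume x: "x \<in> T"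
      have "ereal (\<psi> x) \<le> Sup ?V"
        using x by (auto intro: Sup_upper)
      moreover have "ereal (\<psi> x) \<noteq> Sup ?V"
      proof
        assume "ereal (\<psi> x) = Sup ?V"
        then have "\<forall>y\<in>T. \<psi> y \<le> \<psi> x"
          by (metis Sup_upper ereal_less_eq(3) image_eqI)
        then show False
          using 3(2) x by blast
      qed
      ultimately have "ereal (\<psi> x) < (SUP k. a k)"
        using a(3) by simp
      then obtain k where "ereal (\<psi> x) < a k"
        by (auto simp: less_SUP_iff)
      then show "x \<in> (\<Union>k. C k)"
        using x T by (auto simp: C_def intro: less_imp_le)
    qed
    ultimately show ?thesis
      using C_sets by (intro outer_leI[of "\<Union>k. C k"]) auto
  qed
qed

lemma emeasure_density_le_if_dominated:
  fixes h1 h2 :: "'a \<Rightarrow> real"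
  assumes C: "C \<in> sets M" and h1: "h1 \<in> borel_measurable M" and h2: "h2 \<in> borel_measurable M"
    and c: "c \<ge> 0" and dom: "\<And>y. y \<in> C \<Longrightarrow> h1 y \<le> c * h2 y"
    and h2_nonneg: "\<And>y. y \<in> space M \<Longrightarrow> h2 y \<ge> 0"
    and prob: "prob_space (density M (\<lambda>x. ennreal (h2 x)))"
  shows "emeasure (density M (\<lambda>x. ennreal (h1 x))) C \<le> ennreal c"
proof -
  have "emeasure (density M (\<lambda>x. ennreal (h1 x))) C = (\<integral>\<^sup>+x. ennreal (h1 x) * indicator C x \<partial>M)"
    using C h1 by (simp add: emeasure_density)
  also have "\<dots> \<le> (\<integral>\<^sup>+x. ennreal c * (ennreal (h2 x) * indicator C x) \<partial>M)"
  proof (rule nn_integral_mono)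
    fix x assume x: "x \<in> space M"
    show "ennreal (h1 x) * indicator C x \<le> ennreal c * (ennreal (h2 x) * indicator C x)"
      using dom[of x] c h2_nonneg[OF x]
      by (auto simp: indicator_def ennreal_mult[symmetric] intro: ennreal_leI)
  qed
  also have "\<dots> = ennreal c * emeasure (density M (\<lambda>x. ennreal (h2 x))) C"
    using C h2 by (simp add: nn_integral_cmult emeasure_density)
  also have "\<dots> \<le> ennreal c"
    using prob_space.emeasure_le_1[OF prob] mult_left_mono[of _ 1 "ennreal c"] by auto
  finally show ?thesis .
qed

lemma ratio_le_SUP_ratio:
  fixes h :: "real \<Rightarrow> real"
  assumes m: "m \<in> \<Theta>" and max: "\<And>t. t \<in> \<Theta> \<Longrightarrow> h t \<le> h m" and "0 \<le> h m"
    and S: "S \<subseteq> \<Theta>" "\<theta> \<in> S"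
  shows "h \<theta> / h m \<le> (SUP t\<in>S. h t) / (SUP t\<in>\<Theta>. h t)"
proof -
  have "(SUP t\<in>\<Theta>. h t) = h m"
    using m max by (intro cSup_eq_maximum) auto
  moreover have "h \<theta> \<le> (SUP t\<in>S. h t)"
    using S max by (intro cSUP_upper2[of h S \<theta>] bdd_aboveI2[of _ _ "h m"]) auto
  ultimately show ?thesis
    using \<open>0 \<le> h m\<close> by (simp add: divide_right_mono)
qed

locale mlr_family =
  fixes M :: "'a measure" and f :: "real \<Rightarrow> 'a \<Rightarrow> real" and \<Theta> :: "real set"
    and \<phi> :: "'a \<Rightarrow> real" and \<Lambda> :: "real \<Rightarrow> real \<Rightarrow> real \<Rightarrow> real"
  assumes f_meas: "\<And>\<theta>. \<theta> \<in> \<Theta> \<Longrightarrow> f \<theta> \<in> borel_measurable M"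
    and f_nonneg: "\<And>\<theta> x. \<theta> \<in> \<Theta> \<Longrightarrow> x \<in> space M \<Longrightarrow> f \<theta> x \<ge> 0"
    and f_prob: "\<And>\<theta>. \<theta> \<in> \<Theta> \<Longrightarrow> prob_space (density M (\<lambda>x. ennreal (f \<theta> x)))"
    and phi_meas: "\<phi> \<in> borel_measurable M"
    and LR: "\<And>\<theta>0 \<theta>1 x. \<theta>0 \<in> \<Theta> \<Longrightarrow> \<theta>1 \<in> \<Theta> \<Longrightarrow> x \<in> space M \<Longrightarrow>
               f \<theta>1 x = \<Lambda> (\<phi> x) \<theta>0 \<theta>1 * f \<theta>0 x"
    and LR_mono: "\<And>\<theta>0 \<theta>1. \<theta>0 \<in> \<Theta> \<Longrightarrow> \<theta>1 \<in> \<Theta> \<Longrightarrow> \<theta>0 < \<theta>1 \<Longrightarrow>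
               mono_on (\<phi> ` space M) (\<lambda>t. \<Lambda> t \<theta>0 \<theta>1)"
begin

lemma likelihood_pos:
  assumes "\<theta> \<in> \<Theta>" "t \<in> \<Theta>" "x \<in> space M" "f \<theta> x \<noteq> 0"
  shows "f t x > 0"
  using LR[OF assms(2,1,3)] f_nonneg[OF assms(2,3)] assms(4) by (auto simp: order_le_less)

text \<open>The monotone likelihood ratio in cross-multiplied form, which needs no positivity.\<close>

lemma likelihood_cross_le:
  assumes a: "a \<in> \<Theta>" and b: "b \<in> \<Theta>" and "a \<le> b"
    and x: "x \<in> space M" and y: "y \<in> space M" and "\<phi> y \<le> \<phi> x"
  shows "f b y * f a x \<le> f b x * f a y"
proof (cases "a = b")
  case True
  then show ?thesis
    by (simp add: mult.commute)
next
  case False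
  with \<open>a \<le> b\<close> have "\<Lambda> (\<phi> y) a b \<le> \<Lambda> (\<phi> x) a b"
    using mono_onD[OF LR_mono[OF a b]] x y \<open>\<phi> y \<le> \<phi> x\<close> by auto
  then have "\<Lambda> (\<phi> y) a b * (f a y * f a x) \<le> \<Lambda> (\<phi> x) a b * (f a y * f a x)"
    using f_nonneg[OF a x] f_nonneg[OF a y] by (intro mult_right_mono) auto
  then show ?thesis
    using LR[OF a b x] LR[OF a b y] by (simp add: ac_simps)
qed

lemma emeasure_density_le_by_cross:
  assumes \<theta>: "\<theta> \<in> \<Theta>" and t: "t \<in> \<Theta>" and D: "D \<in> sets M"
    and x: "x \<in> space M" "f \<theta> x \<noteq> 0" and ratio: "f \<theta> x / f t x \<le> c"
    and cross: "\<And>y. y \<in> D \<Longrightarrow> f \<theta> y * f t x \<le> f \<theta> x * f t y"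
  shows "emeasure (density M (\<lambda>x. ennreal (f \<theta> x))) D \<le> ennreal c"
proof -
  have ftx: "f t x > 0"
    using likelihood_pos[OF \<theta> t x] .
  have "c \<ge> 0"
    using ratio f_nonneg[OF \<theta> x(1)] ftx by (meson divide_nonneg_pos order_trans)
  moreover have "f \<theta> y \<le> c * f t y" if "y \<in> D" for y
  proof -
    have "f \<theta> y * f t x \<le> f \<theta> x * f t y"
      using cross[OF that] .
    also have "\<dots> \<le> c * f t x * f t y"
      using ratio ftx f_nonneg[OF t] D that
      by (intro mult_right_mono) (auto simp: divide_le_eq dest: sets.sets_into_space)
    finally show ?thesis
      using ftx by (simp add: mult.commute mult.left_commute)
  qed
  ultimately show ?thesis
    using f_nonneg[OF t] f_prob[OF t]
    by (intro emeasure_density_le_if_dominated[OF D f_meas[OF \<theta>] f_meas[OF t]]) auto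
qed

context
  fixes est :: "'a \<Rightarrow> real"
  assumes est: "\<And>x. x \<in> space M \<Longrightarrow> est x \<in> \<Theta>"
begin

lemma outer_le_ratio_tail:
  fixes \<psi> :: "'a \<Rightarrow> real"
  assumes \<theta>: "\<theta> \<in> \<Theta>" and \<psi>: "\<psi> \<in> borel_measurable M"
    and cross: "\<And>x y. x \<in> space M \<Longrightarrow> y \<in> space M \<Longrightarrow> Q x \<Longrightarrow> \<psi> y \<le> \<psi> x \<Longrightarrow>
                  f \<theta> y * f (est x) x \<le> f \<theta> x * f (est x) y"
  shows "outer_le (density M (\<lambda>x. ennreal (f \<theta> x)))
           {x \<in> space M. f \<theta> x / f (est x) x \<le> c \<and> Q x} (ennreal c)"
proof -
  let ?N = "density M (\<lambda>x. ennreal (f \<theta> x))"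
  let ?A = "{x \<in> space M. f \<theta> x / f (est x) x \<le> c \<and> Q x}"
  have "emeasure ?N {y \<in> space ?N. \<psi> y \<le> \<psi> x} \<le> ennreal c"
    if "x \<in> {x \<in> ?A. f \<theta> x \<noteq> 0}" for x
  proof -
    have x: "x \<in> space M" "f \<theta> x \<noteq> 0" "f \<theta> x / f (est x) x \<le> c" "Q x"
      using that by auto
    have D: "{y \<in> space M. \<psi> y \<le> \<psi> x} \<in> sets M"
      using \<psi> by (simp add: borel_measurable_iff_le)
    have "emeasure ?N {y \<in> space M. \<psi> y \<le> \<psi> x} \<le> ennreal c"
      by (rule emeasure_density_le_by_cross[OF \<theta> est[OF x(1)] D x(1-3)])
        (use cross[OF x(1) _ x(4)] in blast)
    then show ?thesis
      by simp
  qed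
  then have "outer_le ?N {x \<in> ?A. f \<theta> x \<noteq> 0} (ennreal c)"
    using \<psi> by (intro outer_le_sublevels) auto
  then show ?thesis
    by (rule outer_le_density_support[OF f_meas[OF \<theta>], rotated]) blast
qed

lemma lower_tail_outer_le:
  assumes \<theta>: "\<theta> \<in> \<Theta>"
  shows "outer_le (density M (\<lambda>x. ennreal (f \<theta> x)))
           {x \<in> space M. f \<theta> x / f (est x) x \<le> c \<and> est x \<le> \<theta>} (ennreal c)"
  using est \<theta> by (intro outer_le_ratio_tail[OF \<theta> phi_meas] likelihood_cross_le) auto

lemma upper_tail_outer_le:
  assumes \<theta>: "\<theta> \<in> \<Theta>"
  shows "outer_le (density M (\<lambda>x. ennreal (f \<theta> x)))
           {x \<in> space M. f \<theta> x / f (est x) x \<le> c \<and> \<theta> \<le> est x} (ennreal c)"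
proof (rule outer_le_ratio_tail[OF \<theta>, where \<psi> = "\<lambda>x. - \<phi> x"])
  fix x y assume "x \<in> space M" "y \<in> space M" "\<theta> \<le> est x" "- \<phi> y \<le> - \<phi> x"
  then have "f (est x) x * f \<theta> y \<le> f (est x) y * f \<theta> x"
    using \<theta> est by (intro likelihood_cross_le) auto
  then show "f \<theta> y * f (est x) x \<le> f \<theta> x * f (est x) y"
    by (simp add: mult.commute)
qed (simp_all add: phi_meas borel_measurable_uminus)

lemma Pr_lower_tail:
  "\<theta> \<in> \<Theta> \<Longrightarrow> Pr M f \<theta> (\<lambda>x. f \<theta> x / f (est x) x \<le> c \<and> est x \<le> \<theta>) \<le> ennreal c"
  by (rule Pr_le_if_outer_le, rule lower_tail_outer_le)

lemma Pr_upper_tail: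
  "\<theta> \<in> \<Theta> \<Longrightarrow> Pr M f \<theta> (\<lambda>x. f \<theta> x / f (est x) x \<le> c \<and> \<theta> \<le> est x) \<le> ennreal c"
  by (rule Pr_le_if_outer_le, rule upper_tail_outer_le)

lemma Pr_ratio_le:
  assumes "\<theta> \<in> \<Theta>" "c \<ge> 0"
  shows "Pr M f \<theta> (\<lambda>x. f \<theta> x / f (est x) x \<le> c) \<le> ennreal (2 * c)"
proof (rule Pr_le_if_outer_le)
  have "outer_le (density M (\<lambda>x. ennreal (f \<theta> x)))
      ({x \<in> space M. f \<theta> x / f (est x) x \<le> c \<and> est x \<le> \<theta>} \<union>
       {x \<in> space M. f \<theta> x / f (est x) x \<le> c \<and> \<theta> \<le> est x}) (ennreal c + ennreal c)"
    using assms by (intro outer_le_Un lower_tail_outer_le upper_tail_outer_le)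
  also have "ennreal c + ennreal c = ennreal (2 * c)"
    using \<open>c \<ge> 0\<close> by (simp flip: ennreal_plus)
  finally show "outer_le (density M (\<lambda>x. ennreal (f \<theta> x)))
      {x \<in> space M. f \<theta> x / f (est x) x \<le> c} (ennreal (2 * c))"
    by (rule outer_le_subset[rotated]) auto
qed

context
  assumes mle: "\<And>x t. x \<in> space M \<Longrightarrow> t \<in> \<Theta> \<Longrightarrow> f t x \<le> f (est x) x"
begin

lemma ratio_le_profile_ratio:
  assumes "x \<in> space M" "S \<subseteq> \<Theta>" "\<theta> \<in> S"
  shows "f \<theta> x / f (est x) x \<le> (SUP t\<in>S. f t x) / (SUP t\<in>\<Theta>. f t x)"
  using assms est mle f_nonneg by (intro ratio_le_SUP_ratio) auto

lemma Pr_profile_lower_tail: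
  assumes "S \<subseteq> \<Theta>" "\<theta> \<in> S"
  shows "Pr M f \<theta> (\<lambda>x. (SUP t\<in>S. f t x) / (SUP t\<in>\<Theta>. f t x) \<le> c
                        \<and> ereal (est x) \<le> (INF s\<in>S. ereal s)) \<le> ennreal c"
proof -
  have "(INF s\<in>S. ereal s) \<le> ereal \<theta>"
    using \<open>\<theta> \<in> S\<close> by (rule INF_lower)
  then have "Pr M f \<theta> (\<lambda>x. (SUP t\<in>S. f t x) / (SUP t\<in>\<Theta>. f t x) \<le> c
                        \<and> ereal (est x) \<le> (INF s\<in>S. ereal s))
      \<le> Pr M f \<theta> (\<lambda>x. f \<theta> x / f (est x) x \<le> c \<and> est x \<le> \<theta>)"
    using ratio_le_profile_ratio[OF _ assms]
    by (intro Pr_mono) (metis (no_types, lifting) ereal_less_eq(3) order_trans)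
  also have "\<dots> \<le> ennreal c"
    using assms by (intro Pr_lower_tail) auto
  finally show ?thesis .
qed

lemma Pr_profile_upper_tail:
  assumes "S \<subseteq> \<Theta>" "\<theta> \<in> S"
  shows "Pr M f \<theta> (\<lambda>x. (SUP t\<in>S. f t x) / (SUP t\<in>\<Theta>. f t x) \<le> c
                        \<and> ereal (est x) \<ge> (SUP s\<in>S. ereal s)) \<le> ennreal c"
proof -
  have "ereal \<theta> \<le> (SUP s\<in>S. ereal s)"
    using \<open>\<theta> \<in> S\<close> by (rule SUP_upper)
  then have "Pr M f \<theta> (\<lambda>x. (SUP t\<in>S. f t x) / (SUP t\<in>\<Theta>. f t x) \<le> c
                        \<and> ereal (est x) \<ge> (SUP s\<in>S. ereal s))
      \<le> Pr M f \<theta> (\<lambda>x. f \<theta> x / f (est x) x \<le> c \<and> \<theta> \<le> est x)"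
    using ratio_le_profile_ratio[OF _ assms]
    by (intro Pr_mono) (metis (no_types, lifting) ereal_less_eq(3) order_trans)
  also have "\<dots> \<le> ennreal c"
    using assms by (intro Pr_upper_tail) auto
  finally show ?thesis .
qed

lemma Pr_profile_ratio_le:
  assumes "S \<subseteq> \<Theta>" "\<theta> \<in> S" "c \<ge> 0"
  shows "Pr M f \<theta> (\<lambda>x. (SUP t\<in>S. f t x) / (SUP t\<in>\<Theta>. f t x) \<le> c) \<le> ennreal (2 * c)"
proof -
  have "Pr M f \<theta> (\<lambda>x. (SUP t\<in>S. f t x) / (SUP t\<in>\<Theta>. f t x) \<le> c)
      \<le> Pr M f \<theta> (\<lambda>x. f \<theta> x / f (est x) x \<le> c)"
    using ratio_le_profile_ratio[OF _ assms(1,2)] by (intro Pr_mono) (blast intro: order_trans)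
  also have "\<dots> \<le> ennreal (2 * c)"
    using assms by (intro Pr_ratio_le) auto
  finally show ?thesis .
qed

end

end

end

theorem theorem2:
  fixes M :: "'a measure"
    and f :: "real \<Rightarrow> 'a \<Rightarrow> real"
    and \<Theta> :: "real set"
    and \<phi> :: "'a \<Rightarrow> real"
    and \<Lambda> :: "real \<Rightarrow> real \<Rightarrow> real \<Rightarrow> real"
    and g :: "real \<Rightarrow> real"
    and \<alpha> :: real
  assumes alpha_pos: "\<alpha> > 0"
    and f_meas: "\<And>\<theta>. \<theta> \<in> \<Theta> \<Longrightarrow> f \<theta> \<in> borel_measurable M"
    and f_nonneg: "\<And>\<theta> x. \<theta> \<in> \<Theta> \<Longrightarrow> x \<in> space M \<Longrightarrow> f \<theta> x \<ge> 0"
    and f_prob: "\<And>\<theta>. \<theta> \<in> \<Theta> \<Longrightarrow> prob_space (density M (\<lambda>x. ennreal (f \<theta> x)))"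
    and phi_meas: "\<phi> \<in> borel_measurable M"
    and LR: "\<And>\<theta>0 \<theta>1 x. \<theta>0 \<in> \<Theta> \<Longrightarrow> \<theta>1 \<in> \<Theta> \<Longrightarrow> x \<in> space M \<Longrightarrow>
               f \<theta>1 x = \<Lambda> (\<phi> x) \<theta>0 \<theta>1 * f \<theta>0 x"
    and LR_mono: "\<And>\<theta>0 \<theta>1. \<theta>0 \<in> \<Theta> \<Longrightarrow> \<theta>1 \<in> \<Theta> \<Longrightarrow> \<theta>0 < \<theta>1 \<Longrightarrow>
               mono_on (\<phi> ` space M) (\<lambda>t. \<Lambda> t \<theta>0 \<theta>1)"
    and g_range: "\<And>x. x \<in> space M \<Longrightarrow> g (\<phi> x) \<in> \<Theta>"
  shows "(\<forall>\<theta>\<in>\<Theta>.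
            Pr M f \<theta> (\<lambda>x. f \<theta> x / f (g (\<phi> x)) x \<le> \<alpha> / 2 \<and> g (\<phi> x) \<le> \<theta>) \<le> ennreal (\<alpha> / 2)
          \<and> Pr M f \<theta> (\<lambda>x. f \<theta> x / f (g (\<phi> x)) x \<le> \<alpha> / 2 \<and> g (\<phi> x) \<ge> \<theta>) \<le> ennreal (\<alpha> / 2)
          \<and> Pr M f \<theta> (\<lambda>x. f \<theta> x / f (g (\<phi> x)) x \<le> \<alpha> / 2) \<le> ennreal \<alpha>)
       \<and> ((\<forall>x\<in>space M. \<forall>t\<in>\<Theta>. f t x \<le> f (g (\<phi> x)) x) \<longrightarrow>
          (\<forall>S. S \<noteq> {} \<and> S \<subseteq> \<Theta> \<longrightarrow> (\<forall>\<theta>\<in>S.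
             Pr M f \<theta> (\<lambda>x. (SUP t\<in>S. f t x) / (SUP t\<in>\<Theta>. f t x) \<le> \<alpha> / 2
                             \<and> ereal (g (\<phi> x)) \<le> (INF s\<in>S. ereal s)) \<le> ennreal (\<alpha> / 2)
           \<and> Pr M f \<theta> (\<lambda>x. (SUP t\<in>S. f t x) / (SUP t\<in>\<Theta>. f t x) \<le> \<alpha> / 2
                             \<and> ereal (g (\<phi> x)) \<ge> (SUP s\<in>S. ereal s)) \<le> ennreal (\<alpha> / 2)
           \<and> Pr M f \<theta> (\<lambda>x. (SUP t\<in>S. f t x) / (SUP t\<in>\<Theta>. f t x) \<le> \<alpha> / 2) \<le> ennreal \<alpha>)))"
proof -
  interpret mlr_family M f \<Theta> \<phi> \<Lambda>
    by (rule mlr_family.intro[OF f_meas f_nonneg f_prob phi_meas LR LR_mono])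
  show ?thesis
  proof (intro conjI ballI impI allI)
    fix \<theta> assume \<theta>: "\<theta> \<in> \<Theta>"
    show "Pr M f \<theta> (\<lambda>x. f \<theta> x / f (g (\<phi> x)) x \<le> \<alpha> / 2 \<and> g (\<phi> x) \<le> \<theta>) \<le> ennreal (\<alpha> / 2)"
      by (rule Pr_lower_tail[where est = "\<lambda>x. g (\<phi> x)", OF g_range \<theta>])
    show "Pr M f \<theta> (\<lambda>x. f \<theta> x / f (g (\<phi> x)) x \<le> \<alpha> / 2 \<and> g (\<phi> x) \<ge> \<theta>) \<le> ennreal (\<alpha> / 2)"
      by (rule Pr_upper_tail[where est = "\<lambda>x. g (\<phi> x)", OF g_range \<theta>])
    show "Pr M f \<theta> (\<lambda>x. f \<theta> x / f (g (\<phi> x)) x \<le> \<alpha> / 2) \<le> ennreal \<alpha>"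
      using Pr_ratio_le[where est = "\<lambda>x. g (\<phi> x)" and c = "\<alpha> / 2", OF g_range \<theta>] alpha_pos
      by simp
  next
    fix S \<theta>
    assume "\<forall>x\<in>space M. \<forall>t\<in>\<Theta>. f t x \<le> f (g (\<phi> x)) x"
      and "S \<noteq> {} \<and> S \<subseteq> \<Theta>" "\<theta> \<in> S"
    then have mle: "\<And>x t. x \<in> space M \<Longrightarrow> t \<in> \<Theta> \<Longrightarrow> f t x \<le> f (g (\<phi> x)) x"
      and S: "S \<subseteq> \<Theta>" "\<theta> \<in> S"
      by auto
    show "Pr M f \<theta> (\<lambda>x. (SUP t\<in>S. f t x) / (SUP t\<in>\<Theta>. f t x) \<le> \<alpha> / 2
                             \<and> ereal (g (\<phi> x)) \<le> (INF s\<in>S. ereal s)) \<le> ennreal (\<alpha> / 2)"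
      using Pr_profile_lower_tail[where est = "\<lambda>x. g (\<phi> x)", OF g_range mle S] .
    show "Pr M f \<theta> (\<lambda>x. (SUP t\<in>S. f t x) / (SUP t\<in>\<Theta>. f t x) \<le> \<alpha> / 2
                             \<and> ereal (g (\<phi> x)) \<ge> (SUP s\<in>S. ereal s)) \<le> ennreal (\<alpha> / 2)"
      using Pr_profile_upper_tail[where est = "\<lambda>x. g (\<phi> x)", OF g_range mle S] .
    show "Pr M f \<theta> (\<lambda>x. (SUP t\<in>S. f t x) / (SUP t\<in>\<Theta>. f t x) \<le> \<alpha> / 2) \<le> ennreal \<alpha>"
      using Pr_profile_ratio_le[where est = "\<lambda>x. g (\<phi> x)" and c = "\<alpha> / 2", OF g_range mle S]
        alpha_pos by simp
  qed
qed

end
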